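(* Let $(\gamma_{n})_{n\in\mathbb{N}}$ be nonnegative integrable functions on $[0,\infty)$ with $\rho:=\sup_{n\in\mathbb{N}}\int_{0}^{\infty}\gamma_{n}(t)dt<1$. For $M\in\mathbb{N}$ and $s\ge0$ set $C_{M}^{1}(s,M)=1$, $C_{M}^{2}(s,M)=0$, and recursively for $1\le n<M$, $$C_{n}^{1}(s,M):=1+\int_{0}^{s}C_{n+1}^{1}(s-r,M)\gamma_{n}(r)\,dr,$$ $$C_{n}^{2}(s,M):=\int_{0}^{s}\left(C_{n+1}^{2}(s-r,M)+\tfrac{1}{2}[C_{n+1}^{1}(s-r,M)]^{2}\right)\gamma_{n}(r)\,dr.$$ Then for all $M\in\mathbb{N}$, $1\le n\le M$ and $s\ge0$, $$C_{n}^{1}(s,M)\le\frac{1}{1-\rho}\qquad\text{and}\qquad C_{n}^{2}(s,M)\le\frac{1}{(1-\rho)^{3}}.$$ *)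

theory Defs
  imports "HOL-Analysis.Analysis"
begin

function C1 :: "(nat \<Rightarrow> real \<Rightarrow> real) \<Rightarrow> nat \<Rightarrow> nat \<Rightarrow> real \<Rightarrow> real" where
  "C1 g M n s = (if n < M
      then 1 + (LINT r:{0..s}|lborel. C1 g M (Suc n) (s - r) * g n r)
      else 1)"
  by auto
termination by (relation "Wellfounded.measure (\<lambda>(g, M, n, s). M - n)") auto

function C2 :: "(nat \<Rightarrow> real \<Rightarrow> real) \<Rightarrow> nat \<Rightarrow> nat \<Rightarrow> real \<Rightarrow> real" where
  "C2 g M n s = (if n < M
      then (LINT r:{0..s}|lborel.
              (C2 g M (Suc n) (s - r) + (1/2) * (C1 g M (Suc n) (s - r))\<^sup>2) * g n r)
      else 0)"
  by auto
termination by (relation "Wellfounded.measure (\<lambda>(g, M, n, s). M - n)") auto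

end

theory Submission
  imports Defs
begin

text \<open>Put \<open>A = 1/(1-\<rho>)\<close>. Since each \<open>\<gamma>\<^sub>n\<close> has mass at most \<open>\<rho>\<close>, a bound
  \<open>C\<^sup>1\<^sub>n\<^sub>+\<^sub>1 \<le> A\<close> gives \<open>C\<^sup>1\<^sub>n \<le> 1 + A\<rho> = A\<close>, and then bounds \<open>C\<^sup>1 \<le> A\<close>,
  \<open>C\<^sup>2\<^sub>n\<^sub>+\<^sub>1 \<le> A\<^sup>3\<close> give \<open>C\<^sup>2\<^sub>n \<le> (A\<^sup>3 + A\<^sup>2/2)\<rho> \<le> A\<^sup>3\<close>. Backward induction
  from \<open>n = M\<close> yields both bounds.\<close>

lemma set_integral_weighted_nonneg:
  fixes a g :: "real \<Rightarrow> real"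
  assumes "\<And>t. t \<ge> 0 \<Longrightarrow> g t \<ge> 0" and "\<And>r. r \<in> {0..s} \<Longrightarrow> a r \<ge> 0"
  shows "(LINT r:{0..s}|lborel. a r * g r) \<ge> 0"
  unfolding set_lebesgue_integral_def
  by (rule integral_nonneg_AE) (auto simp: indicator_def assms)

lemma set_integral_weighted_le:
  fixes a g :: "real \<Rightarrow> real"
  assumes g_nonneg: "\<And>t. t \<ge> 0 \<Longrightarrow> g t \<ge> 0"
    and g_integrable: "set_integrable lborel {0..} g"
    and g_mass: "(LINT t:{0..}|lborel. g t) \<le> \<rho>"
    and "\<rho> \<ge> 0" and "B \<ge> 0"
    and a_le: "\<And>r. r \<in> {0..s} \<Longrightarrow> a r \<le> B"
  shows "(LINT r:{0..s}|lborel. a r * g r) \<le> B * \<rho>"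
  \<comment> \<open>No measurability of \<open>a\<close> is assumed: a non-integrable integrand has integral \<open>0\<close>.\<close>
proof (cases "set_integrable lborel {0..s} (\<lambda>r. a r * g r)")
  case True
  have g_integrable_s: "set_integrable lborel {0..s} g"
    by (rule set_integrable_subset[OF g_integrable]) auto
  have "(LINT r:{0..s}|lborel. g r) \<le> (LINT t:{0..}|lborel. g t)"
    using g_integrable_s g_integrable unfolding set_lebesgue_integral_def set_integrable_def
    by (intro integral_mono) (auto simp: indicator_def g_nonneg)
  then have mass_s: "(LINT r:{0..s}|lborel. g r) \<le> \<rho>"
    using g_mass by linarith
  have "(LINT r:{0..s}|lborel. a r * g r) \<le> (LINT r:{0..s}|lborel. B * g r)"
    using True g_integrable_s by (intro set_integral_mono) (auto intro!: mult_right_mono a_le g_nonneg)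
  also have "\<dots> = B * (LINT r:{0..s}|lborel. g r)"
    by simp
  also have "\<dots> \<le> B * \<rho>"
    using mass_s \<open>B \<ge> 0\<close> by (rule mult_left_mono)
  finally show ?thesis .
next
  case False
  then have "(LINT r:{0..s}|lborel. a r * g r) = 0"
    unfolding set_lebesgue_integral_def set_integrable_def
    by (rule not_integrable_integral_eq)
  then show ?thesis
    using \<open>\<rho> \<ge> 0\<close> \<open>B \<ge> 0\<close> by simp
qed

lemma geometric_bound_fixpoint:
  fixes \<rho> :: real
  assumes "\<rho> < 1"
  shows "1 + 1 / (1 - \<rho>) * \<rho> = 1 / (1 - \<rho>)"
  using assms by (simp add: field_simps)

lemma cubic_bound_invariant:
  fixes \<rho> :: real
  assumes "0 \<le> \<rho>" and "\<rho> < 1"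
  shows "(1 / (1 - \<rho>) ^ 3 + 1/2 * (1 / (1 - \<rho>))\<^sup>2) * \<rho> \<le> 1 / (1 - \<rho>) ^ 3"
proof -
  have pos: "(1 - \<rho>) ^ 3 > 0"
    using assms by simp
  have "1/2 * (1 / (1 - \<rho>))\<^sup>2 = ((1 - \<rho>) / 2) / (1 - \<rho>) ^ 3"
    using assms by (simp add: power2_eq_square power3_eq_cube)
  then have "(1 / (1 - \<rho>) ^ 3 + 1/2 * (1 / (1 - \<rho>))\<^sup>2) * \<rho> = (\<rho> + \<rho> * (1 - \<rho>) / 2) / (1 - \<rho>) ^ 3"
    by (simp add: add_divide_distrib algebra_simps)
  also have "\<dots> \<le> 1 / (1 - \<rho>) ^ 3"
  proof (rule divide_right_mono)
    have "0 \<le> (1 - \<rho>) * (2 - \<rho>)"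
      using assms by simp
    then show "\<rho> + \<rho> * (1 - \<rho>) / 2 \<le> 1"
      by (simp add: field_simps)
  qed (use pos in simp)
  finally show ?thesis .
qed

declare C1.simps[simp del] C2.simps[simp del]

lemma C1_Suc_eq:
  "n < M \<Longrightarrow> C1 g M n s = 1 + (LINT r:{0..s}|lborel. C1 g M (Suc n) (s - r) * g n r)"
  by (subst C1.simps) simp

lemma C2_Suc_eq:
  "n < M \<Longrightarrow> C2 g M n s =
     (LINT r:{0..s}|lborel. (C2 g M (Suc n) (s - r) + 1/2 * (C1 g M (Suc n) (s - r))\<^sup>2) * g n r)"
  by (subst C2.simps) simp

locale kernel_family =
  fixes \<gamma> :: "nat \<Rightarrow> real \<Rightarrow> real" and \<rho> :: real and L :: nat
  assumes kernel_nonneg: "\<And>k t. L \<le> k \<Longrightarrow> t \<ge> 0 \<Longrightarrow> \<gamma> k t \<ge> 0"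
    and kernel_integrable: "\<And>k. L \<le> k \<Longrightarrow> set_integrable lborel {0..} (\<gamma> k)"
    and kernel_mass: "\<And>k. L \<le> k \<Longrightarrow> (LINT t:{0..}|lborel. \<gamma> k t) \<le> \<rho>"
    and rho_nonneg: "0 \<le> \<rho>" and rho_less_1: "\<rho> < 1"
begin

lemma C1_bounds:
  assumes "L \<le> n" "n \<le> M"
  shows "1 \<le> C1 \<gamma> M n s \<and> C1 \<gamma> M n s \<le> 1 / (1 - \<rho>)"
  using assms(2,1)
proof (induction n arbitrary: s rule: inc_induct)
  case base
  show ?case
    using rho_nonneg rho_less_1 by (simp add: C1.simps field_simps)
next
  case (step n)
  let ?I = "LINT r:{0..s}|lborel. C1 \<gamma> M (Suc n) (s - r) * \<gamma> n r"
  have "0 \<le> ?I"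
    using step by (intro set_integral_weighted_nonneg kernel_nonneg) (auto intro: order_trans[OF zero_le_one])
  moreover have "?I \<le> 1 / (1 - \<rho>) * \<rho>"
    using step rho_nonneg rho_less_1
    by (intro set_integral_weighted_le kernel_nonneg kernel_integrable kernel_mass) auto
  ultimately show ?case
    using step.hyps C1_Suc_eq[of n M \<gamma> s] geometric_bound_fixpoint[OF rho_less_1] by auto
qed

lemma C2_bounds:
  assumes "L \<le> n" "n \<le> M"
  shows "0 \<le> C2 \<gamma> M n s \<and> C2 \<gamma> M n s \<le> 1 / (1 - \<rho>) ^ 3"
  using assms(2,1)
proof (induction n arbitrary: s rule: inc_induct)
  case base
  show ?case
    using rho_less_1 by (simp add: C2.simps)
next
  case (step n)
  let ?a = "\<lambda>r. C2 \<gamma> M (Suc n) (s - r) + 1/2 * (C1 \<gamma> M (Suc n) (s - r))\<^sup>2"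
  have a_bounds: "0 \<le> ?a r \<and> ?a r \<le> 1 / (1 - \<rho>) ^ 3 + 1/2 * (1 / (1 - \<rho>))\<^sup>2" for r
  proof -
    have "1 \<le> C1 \<gamma> M (Suc n) (s - r)" "C1 \<gamma> M (Suc n) (s - r) \<le> 1 / (1 - \<rho>)"
      using C1_bounds[of "Suc n" M "s - r"] step.hyps step.prems by auto
    then have "(C1 \<gamma> M (Suc n) (s - r))\<^sup>2 \<le> (1 / (1 - \<rho>))\<^sup>2"
      by (intro power_mono) auto
    then show ?thesis
      using step.IH[of "s - r"] step.prems by auto
  qed
  have "0 \<le> (LINT r:{0..s}|lborel. ?a r * \<gamma> n r)"
    using step a_bounds by (intro set_integral_weighted_nonneg kernel_nonneg) auto
  moreover have "(LINT r:{0..s}|lborel. ?a r * \<gamma> n r) \<le> (1 / (1 - \<rho>) ^ 3 + 1/2 * (1 / (1 - \<rho>))\<^sup>2) * \<rho>"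
    using step a_bounds rho_nonneg rho_less_1
    by (intro set_integral_weighted_le kernel_nonneg kernel_integrable kernel_mass) auto
  ultimately show ?case
    using step.hyps C2_Suc_eq[of n M \<gamma> s] cubic_bound_invariant[OF rho_nonneg rho_less_1] by auto
qed

end

theorem lemma4p8:
  fixes \<gamma> :: "nat \<Rightarrow> real \<Rightarrow> real" and \<rho> :: real
  assumes nonneg: "\<And>n t. n \<ge> 1 \<Longrightarrow> t \<ge> 0 \<Longrightarrow> \<gamma> n t \<ge> 0"
    and integ: "\<And>n. n \<ge> 1 \<Longrightarrow> set_integrable lborel {0..} (\<gamma> n)"
    and bdd: "bdd_above ((\<lambda>n. LINT t:{0..}|lborel. \<gamma> n t) ` {1..})"
    and rho_def: "\<rho> = (SUP n\<in>{1..}. LINT t:{0..}|lborel. \<gamma> n t)"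
    and rho_lt: "\<rho> < 1"
    and M: "M \<ge> 1" and n: "1 \<le> n" "n \<le> M" and s: "s \<ge> 0"
  shows "C1 \<gamma> M n s \<le> 1 / (1 - \<rho>) \<and> C2 \<gamma> M n s \<le> 1 / (1 - \<rho>) ^ 3"
proof -
  have mass: "(LINT t:{0..}|lborel. \<gamma> k t) \<le> \<rho>" if "k \<ge> 1" for k
    unfolding rho_def using bdd that by (intro cSUP_upper) auto
  have "0 \<le> (LINT t:{0..}|lborel. \<gamma> 1 t)"
    unfolding set_lebesgue_integral_def
    by (rule integral_nonneg_AE) (auto simp: indicator_def nonneg)
  with mass[of 1] have "0 \<le> \<rho>"
    by simp
  then interpret kernel_family \<gamma> \<rho> 1
    using nonneg integ mass rho_lt by unfold_locales auto
  show ?thesis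
    using C1_bounds[OF n] C2_bounds[OF n] by blast
qed

end
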